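(* Consider components $m\in[M]$ sharing a common finite action set $\mathcal X_A$ (i.e. $\mathcal X_A^m=\mathcal X_A$ for all $m$) and horizon $T$. The linear relaxation of MILP (IPd) is equivalent to the fluid formulation (F): there exists a feasible solution of one with a given objective value if and only if there exists a feasible solution of the other with the same objective value. In particular $z_{\mathrm F}=z_{\mathrm R}$, where $z_{\mathrm R}$ is the value of the linear relaxation of (IPd).
   Context: Each component $m$ is a POMDP $(\mathcal X_S^m,\mathcal X_O^m,\mathcal X_A,\mathfrak p^m,\mathbf r^m)$ with initial distribution $p^m(s)$, emissions $p^m(o|s)$, transitions $p^m(s'|s,a)$, reward $r^m(s,a,s')$. For a POMDP, $\mathcal Q^{\mathrm d}(T,\mathcal X_S,\mathcal X_O,\mathcal X_A,\mathfrak p)$ is the set of $(\tau,\delta)$ with $\delta^t_{a|o}\in\{0,1\}$, $\sum_a\delta^t_{a|o}=1$, nonnegative $\tau=((\tau^1_s),(\tau^t_{soa}),(\tau^t_{sas'}))$ with (i) $\tau^1_s=p(s)$; (ii) $\sum_{o,a}\tau^t_{soa}=\nu^t_s$, $\nu^1_s=\tau^1_s$, $\nu^t_s=\sum_{s'',a''}\tau^{t-1}_{s''a''s}$ ($t\ge2$); (iii) $\sum_{\bar s}\tau^t_{sa\bar s}=\sum_o\tau^t_{soa}$; (iv) $\tau^t_{sas'}=p(s'|s,a)\sum_{\bar s}\tau^t_{sa\bar s}$; (McCormick) $\tau^t_{soa}\le p(o|s)\nu^t_s$, $\tau^t_{soa}\le\delta^t_{a|o}$, $\tau^t_{soa}\ge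 p(o|s)\nu^t_s+\delta^t_{a|o}-1$. Its linear relaxation allows $\delta^t_{a|o}\in[0,1]$. MILP (IPd): maximize $\sum_t\sum_m\sum_{s,s'\in\mathcal X_S^m,a\in\mathcal X_A}r^m(s,a,s')\tau^{t,m}_{sas'}$ s.t. $(\tau^m,\delta^m)\in\mathcal Q^{\mathrm d}(T,\mathcal X_S^m,\mathcal X_O^m,\mathcal X_A,\mathfrak p^m)$ for all $m$, $\tau^{t,m}_a=\sum_{s,o}\tau^{t,m}_{soa}$, and $\tau^{t,m}_a=\tau^{t,m+1}_a$ for all $a\in\mathcal X_A$, $m\in[M-1]$, $t\in[T]$. Fluid formulation (F): maximize $\sum_t\sum_m\sum_{s,s',a}r^m(s,a,s')x^{t,m}_{sas'}$ over nonnegative $x^{1,m}_s$, $x^{t,m}_{sas'}$, $A^t_a$ s.t. $x^{1,m}_s=\sum_{a',s'}x^{1,m}_{sa's'}$; $\sum_{s',a'}x^{t,m}_{s'a's}=\sum_{a',s'}x^{t+1,m}_{sa's'}$ for $t\in[T-1]$; $x^{1,m}_s=p^m(s)$; $x^{t,m}_{sas'}=p^m(s'|s,a)\sum_{s''}x^{t,m}_{sas''}$; $\sum_{s,s'}x^{t,m}_{sas'}=A^t_a$ for all $a,m,t$. Its value is $z_{\mathrm F}$. *)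

theory Defs
  imports Main "HOL-Library.Extended_Real"
begin

text \<open>A single POMDP with finite state set S, observation set Ob, action set A,
 initial distribution p0 s, emission pe s ob = p(ob|s), transition pt s a s' = p(s'|s,a).  Variables: tau1 s, tauO t s ob a, tauT t s a s', delta t a ob
 (= delta^t_{a|ob}).\<close>

definition nu_of :: "'s set \<Rightarrow> 'a set \<Rightarrow> ('s \<Rightarrow> real) \<Rightarrow> (nat \<Rightarrow> 's \<Rightarrow> 'a \<Rightarrow> 's \<Rightarrow> real)
    \<Rightarrow> nat \<Rightarrow> 's \<Rightarrow> real" where
  "nu_of S A tau1 tauT t s =
     (if t = 1 then tau1 s else (\<Sum>s''\<in>S. \<Sum>a''\<in>A. tauT (t - 1) s'' a'' s))"

text \<open>Linear relaxation of Q^d(T, S, Ob, A, p): delta^t_{a|ob} in [0,1] instead of {0,1}.\<close>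
definition Qd_relax ::
  "nat \<Rightarrow> 's set \<Rightarrow> 'ob set \<Rightarrow> 'a set \<Rightarrow> ('s \<Rightarrow> real) \<Rightarrow> ('s \<Rightarrow> 'ob \<Rightarrow> real)
   \<Rightarrow> ('s \<Rightarrow> 'a \<Rightarrow> 's \<Rightarrow> real)
   \<Rightarrow> ('s \<Rightarrow> real) \<Rightarrow> (nat \<Rightarrow> 's \<Rightarrow> 'ob \<Rightarrow> 'a \<Rightarrow> real) \<Rightarrow> (nat \<Rightarrow> 's \<Rightarrow> 'a \<Rightarrow> 's \<Rightarrow> real)
   \<Rightarrow> (nat \<Rightarrow> 'a \<Rightarrow> 'ob \<Rightarrow> real) \<Rightarrow> bool" where
  "Qd_relax T S Ob A p0 pe pt tau1 tauO tauT delta \<longleftrightarrow>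
     (\<forall>t\<in>{1..T}. \<forall>ob\<in>Ob. (\<forall>a\<in>A. 0 \<le> delta t a ob \<and> delta t a ob \<le> 1) \<and> (\<Sum>a\<in>A. delta t a ob) = 1)
   \<and> (\<forall>s\<in>S. 0 \<le> tau1 s)
   \<and> (\<forall>t\<in>{1..T}. \<forall>s\<in>S. \<forall>ob\<in>Ob. \<forall>a\<in>A. 0 \<le> tauO t s ob a)
   \<and> (\<forall>t\<in>{1..T}. \<forall>s\<in>S. \<forall>a\<in>A. \<forall>s'\<in>S. 0 \<le> tauT t s a s')
   \<and> (\<forall>s\<in>S. tau1 s = p0 s)
   \<and> (\<forall>t\<in>{1..T}. \<forall>s\<in>S. (\<Sum>ob\<in>Ob. \<Sum>a\<in>A. tauO t s ob a) = nu_of S A tau1 tauT t s)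
   \<and> (\<forall>t\<in>{1..T}. \<forall>s\<in>S. \<forall>a\<in>A. (\<Sum>sb\<in>S. tauT t s a sb) = (\<Sum>ob\<in>Ob. tauO t s ob a))
   \<and> (\<forall>t\<in>{1..T}. \<forall>s\<in>S. \<forall>a\<in>A. \<forall>s'\<in>S. tauT t s a s' = pt s a s' * (\<Sum>sb\<in>S. tauT t s a sb))
   \<and> (\<forall>t\<in>{1..T}. \<forall>s\<in>S. \<forall>ob\<in>Ob. \<forall>a\<in>A.
        tauO t s ob a \<le> pe s ob * nu_of S A tau1 tauT t s
      \<and> tauO t s ob a \<le> delta t a ob
      \<and> tauO t s ob a \<ge> pe s ob * nu_of S A tau1 tauT t s + delta t a ob - 1)"

definition IPd_relax_feasible ::
  "nat \<Rightarrow> nat \<Rightarrow> (nat \<Rightarrow> 's set) \<Rightarrow> (nat \<Rightarrow> 'ob set) \<Rightarrow> 'a set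
   \<Rightarrow> (nat \<Rightarrow> 's \<Rightarrow> real) \<Rightarrow> (nat \<Rightarrow> 's \<Rightarrow> 'ob \<Rightarrow> real) \<Rightarrow> (nat \<Rightarrow> 's \<Rightarrow> 'a \<Rightarrow> 's \<Rightarrow> real)
   \<Rightarrow> (nat \<Rightarrow> 's \<Rightarrow> real) \<Rightarrow> (nat \<Rightarrow> nat \<Rightarrow> 's \<Rightarrow> 'ob \<Rightarrow> 'a \<Rightarrow> real)
   \<Rightarrow> (nat \<Rightarrow> nat \<Rightarrow> 's \<Rightarrow> 'a \<Rightarrow> 's \<Rightarrow> real) \<Rightarrow> (nat \<Rightarrow> nat \<Rightarrow> 'a \<Rightarrow> 'ob \<Rightarrow> real) \<Rightarrow> bool" where
  "IPd_relax_feasible M T S Ob A p0 pe pt tau1 tauO tauT delta \<longleftrightarrow>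
     (\<forall>m\<in>{1..M}. Qd_relax T (S m) (Ob m) A (p0 m) (pe m) (pt m)
        (tau1 m) (\<lambda>t. tauO t m) (\<lambda>t. tauT t m) (\<lambda>t. delta t m))
   \<and> (\<forall>t\<in>{1..T}. \<forall>m\<in>{1..<M}. \<forall>a\<in>A.
        (\<Sum>s\<in>S m. \<Sum>ob\<in>Ob m. tauO t m s ob a) = (\<Sum>s\<in>S (m+1). \<Sum>ob\<in>Ob (m+1). tauO t (m+1) s ob a))"

definition IPd_obj ::
  "nat \<Rightarrow> nat \<Rightarrow> (nat \<Rightarrow> 's set) \<Rightarrow> 'a set \<Rightarrow> (nat \<Rightarrow> 's \<Rightarrow> 'a \<Rightarrow> 's \<Rightarrow> real)
   \<Rightarrow> (nat \<Rightarrow> nat \<Rightarrow> 's \<Rightarrow> 'a \<Rightarrow> 's \<Rightarrow> real) \<Rightarrow> real" where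
  "IPd_obj M T S A r tauT =
     (\<Sum>t\<in>{1..T}. \<Sum>m\<in>{1..M}. \<Sum>s\<in>S m. \<Sum>a\<in>A. \<Sum>s'\<in>S m. r m s a s' * tauT t m s a s')"

definition F_feasible ::
  "nat \<Rightarrow> nat \<Rightarrow> (nat \<Rightarrow> 's set) \<Rightarrow> 'a set
   \<Rightarrow> (nat \<Rightarrow> 's \<Rightarrow> real) \<Rightarrow> (nat \<Rightarrow> 's \<Rightarrow> 'a \<Rightarrow> 's \<Rightarrow> real)
   \<Rightarrow> (nat \<Rightarrow> 's \<Rightarrow> real) \<Rightarrow> (nat \<Rightarrow> nat \<Rightarrow> 's \<Rightarrow> 'a \<Rightarrow> 's \<Rightarrow> real) \<Rightarrow> (nat \<Rightarrow> 'a \<Rightarrow> real) \<Rightarrow> bool" where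
  "F_feasible M T S A p0 pt x1 x Aa \<longleftrightarrow>
     (\<forall>m\<in>{1..M}. \<forall>s\<in>S m. 0 \<le> x1 m s)
   \<and> (\<forall>t\<in>{1..T}. \<forall>m\<in>{1..M}. \<forall>s\<in>S m. \<forall>a\<in>A. \<forall>s'\<in>S m. 0 \<le> x t m s a s')
   \<and> (\<forall>t\<in>{1..T}. \<forall>a\<in>A. 0 \<le> Aa t a)
   \<and> (\<forall>m\<in>{1..M}. \<forall>s\<in>S m. x1 m s = (\<Sum>a'\<in>A. \<Sum>s'\<in>S m. x 1 m s a' s'))
   \<and> (\<forall>t\<in>{1..<T}. \<forall>m\<in>{1..M}. \<forall>s\<in>S m.
        (\<Sum>s'\<in>S m. \<Sum>a'\<in>A. x t m s' a' s) = (\<Sum>a'\<in>A. \<Sum>s'\<in>S m. x (t+1) m s a' s'))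
   \<and> (\<forall>m\<in>{1..M}. \<forall>s\<in>S m. x1 m s = p0 m s)
   \<and> (\<forall>t\<in>{1..T}. \<forall>m\<in>{1..M}. \<forall>s\<in>S m. \<forall>a\<in>A. \<forall>s'\<in>S m.
        x t m s a s' = pt m s a s' * (\<Sum>s''\<in>S m. x t m s a s''))
   \<and> (\<forall>t\<in>{1..T}. \<forall>m\<in>{1..M}. \<forall>a\<in>A. (\<Sum>s\<in>S m. \<Sum>s'\<in>S m. x t m s a s') = Aa t a)"

definition z_R where
  "z_R M T S Ob A p0 pe pt r = Sup (ereal ` {IPd_obj M T S A r tauT | tau1 tauO tauT delta.
       IPd_relax_feasible M T S Ob A p0 pe pt tau1 tauO tauT delta})"

definition z_F where
  "z_F M T S A p0 pt r = Sup (ereal ` {IPd_obj M T S A r x | x1 x Aa.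
       F_feasible M T S A p0 pt x1 x Aa})"

end

theory Submission imports Defs begin

text \<open>A feasible point of the relaxation is already a fluid flow: by (ii) and (iii) the
  outflow \<open>\<Sum>a s'. tau t s a s'\<close> of every state equals its inflow \<open>nu t s\<close>, and equal
  observation-action marginals across components give equal action marginals.  Conversely,
  a fluid flow \<open>x\<close> with state-action marginal \<open>y t s a = \<Sum>s'. x t s a s'\<close> becomes feasible
  for the relaxation with \<open>tauO t s o a = p(o|s) * y t s a\<close> and the observation-blind policy
  \<open>delta t a o = \<Sum>s. y t s a\<close>.  Since \<open>y t\<close> is a probability matrix on states \<open>\<times>\<close> actions,
  the McCormick inequalities reduce to comparing an entry with its row sum \<open>nu t s\<close> and its
  column sum \<open>delta t a o\<close>.  Both maps keep the transition variables, hence the objective.\<close>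

lemma eq_first_if_consecutive_eq:
  fixes m M :: nat
  assumes "\<forall>m\<in>{1..<M}. f m = f (m + 1)" and "m \<in> {1..M}"
  shows "f m = f 1"
proof -
  have "1 \<le> m" "m \<le> M" using assms(2) by auto
  then show ?thesis
  proof (induction m rule: nat_induct_at_least)
    case (Suc n)
    then show ?case using assms(1) by auto
  qed simp
qed

lemma probability_matrix_mccormick:
  fixes y :: "'s \<Rightarrow> 'a \<Rightarrow> real"
  assumes "finite S" "finite A"
    and y_nn: "\<And>s a. s \<in> S \<Longrightarrow> a \<in> A \<Longrightarrow> 0 \<le> y s a"
    and y_sum: "(\<Sum>s\<in>S. \<Sum>a\<in>A. y s a) = 1"
    and "s \<in> S" "a \<in> A" "0 \<le> p" "p \<le> 1"
  shows "p * y s a \<le> p * (\<Sum>a'\<in>A. y s a')"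
    and "p * y s a \<le> (\<Sum>s'\<in>S. y s' a)"
    and "p * (\<Sum>a'\<in>A. y s a') + (\<Sum>s'\<in>S. y s' a) - 1 \<le> p * y s a"
proof -
  define col where "col a' = (\<Sum>s'\<in>S. y s' a')" for a'
  have col_sum: "(\<Sum>a'\<in>A. col a') = 1"
    using y_sum by (simp add: col_def sum.swap[of _ A])
  have entry_le_row: "y s a \<le> (\<Sum>a'\<in>A. y s a')"
    using assms by (intro member_le_sum) auto
  have entry_le_col: "y s' a' \<le> col a'" if "s' \<in> S" "a' \<in> A" for s' a'
    unfolding col_def using assms that by (intro member_le_sum) auto
  have row_rest_le: "(\<Sum>a'\<in>A. y s a') - y s a \<le> 1 - col a"
  proof -
    have "(\<Sum>a'\<in>A. y s a') - y s a = (\<Sum>a'\<in>A - {a}. y s a')"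
      using assms by (simp add: sum_diff1)
    also have "\<dots> \<le> (\<Sum>a'\<in>A - {a}. col a')"
      using entry_le_col \<open>s \<in> S\<close> by (intro sum_mono) auto
    also have "\<dots> = 1 - col a"
      using assms col_sum by (simp add: sum_diff1)
    finally show ?thesis .
  qed
  have "0 \<le> y s a" using y_nn assms by simp
  then show "p * y s a \<le> p * (\<Sum>a'\<in>A. y s a')"
    using entry_le_row \<open>0 \<le> p\<close> by (simp add: mult_left_mono)
  show "p * y s a \<le> (\<Sum>s'\<in>S. y s' a)"
    using mult_left_le_one_le[OF \<open>0 \<le> y s a\<close> assms(7,8)] entry_le_col[OF \<open>s \<in> S\<close> \<open>a \<in> A\<close>]
    by (simp add: col_def)
  have "p * ((\<Sum>a'\<in>A. y s a') - y s a) \<le> (\<Sum>a'\<in>A. y s a') - y s a"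
    using entry_le_row assms(7,8) by (simp add: mult_left_le_one_le)
  then show "p * (\<Sum>a'\<in>A. y s a') + (\<Sum>s'\<in>S. y s' a) - 1 \<le> p * y s a"
    using row_rest_le by (simp add: col_def algebra_simps)
qed

definition fluid_component ::
  "nat \<Rightarrow> 's set \<Rightarrow> 'a set \<Rightarrow> ('s \<Rightarrow> real) \<Rightarrow> ('s \<Rightarrow> 'a \<Rightarrow> 's \<Rightarrow> real)
   \<Rightarrow> ('s \<Rightarrow> real) \<Rightarrow> (nat \<Rightarrow> 's \<Rightarrow> 'a \<Rightarrow> 's \<Rightarrow> real) \<Rightarrow> bool" where
  "fluid_component T S A p0 pt x1 x \<longleftrightarrow>
     (\<forall>s\<in>S. 0 \<le> x1 s)
   \<and> (\<forall>t\<in>{1..T}. \<forall>s\<in>S. \<forall>a\<in>A. \<forall>s'\<in>S. 0 \<le> x t s a s')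
   \<and> (\<forall>s\<in>S. x1 s = (\<Sum>a'\<in>A. \<Sum>s'\<in>S. x 1 s a' s'))
   \<and> (\<forall>t\<in>{1..<T}. \<forall>s\<in>S. (\<Sum>s'\<in>S. \<Sum>a'\<in>A. x t s' a' s) = (\<Sum>a'\<in>A. \<Sum>s'\<in>S. x (t+1) s a' s'))
   \<and> (\<forall>s\<in>S. x1 s = p0 s)
   \<and> (\<forall>t\<in>{1..T}. \<forall>s\<in>S. \<forall>a\<in>A. \<forall>s'\<in>S. x t s a s' = pt s a s' * (\<Sum>s''\<in>S. x t s a s''))"

lemma F_feasible_iff_fluid_components:
  "F_feasible M T S A p0 pt x1 x Aa \<longleftrightarrow>
     (\<forall>m\<in>{1..M}. fluid_component T (S m) A (p0 m) (pt m) (x1 m) (\<lambda>t. x t m))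
   \<and> (\<forall>t\<in>{1..T}. \<forall>a\<in>A. 0 \<le> Aa t a)
   \<and> (\<forall>t\<in>{1..T}. \<forall>m\<in>{1..M}. \<forall>a\<in>A. (\<Sum>s\<in>S m. \<Sum>s'\<in>S m. x t m s a s') = Aa t a)"
  unfolding F_feasible_def fluid_component_def ball_conj_distrib
  by (intro iffI conjI; elim conjE; meson)

lemma Qd_relax_outflow_eq_nu:
  assumes Q: "Qd_relax T S Ob A p0 pe pt tau1 tauO tauT delta"
    and "t \<in> {1..T}" "s \<in> S"
  shows "(\<Sum>a\<in>A. \<Sum>s'\<in>S. tauT t s a s') = nu_of S A tau1 tauT t s"
proof -
  have obs_nu: "(\<Sum>ob\<in>Ob. \<Sum>a\<in>A. tauO t s ob a) = nu_of S A tau1 tauT t s"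
    and act_obs: "\<forall>a\<in>A. (\<Sum>s'\<in>S. tauT t s a s') = (\<Sum>ob\<in>Ob. tauO t s ob a)"
    using Q[unfolded Qd_relax_def] assms(2,3) by meson+
  have "(\<Sum>a\<in>A. \<Sum>s'\<in>S. tauT t s a s') = (\<Sum>a\<in>A. \<Sum>ob\<in>Ob. tauO t s ob a)"
    using act_obs by (intro sum.cong) auto
  also have "\<dots> = (\<Sum>ob\<in>Ob. \<Sum>a\<in>A. tauO t s ob a)"
    by (rule sum.swap)
  finally show ?thesis
    using obs_nu by simp
qed

text \<open>(F) asks for \<open>x1 s = (\<Sum>a s'. x 1 s a s')\<close> even when \<open>T = 0\<close>, where (IPd) says nothing
  about period 1; outside \<open>{1..T}\<close> the flow is therefore replaced by that of the uniformly
  random policy started in \<open>p0\<close>.\<close>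

definition pad_flow ::
  "nat \<Rightarrow> 'a set \<Rightarrow> ('s \<Rightarrow> real) \<Rightarrow> ('s \<Rightarrow> 'a \<Rightarrow> 's \<Rightarrow> real)
   \<Rightarrow> (nat \<Rightarrow> 's \<Rightarrow> 'a \<Rightarrow> 's \<Rightarrow> real) \<Rightarrow> nat \<Rightarrow> 's \<Rightarrow> 'a \<Rightarrow> 's \<Rightarrow> real" where
  "pad_flow T A p0 pt x t =
     (if t \<in> {1..T} then x t else (\<lambda>s a s'. p0 s * pt s a s' / real (card A)))"

lemma pad_flow_in_horizon: "t \<in> {1..T} \<Longrightarrow> pad_flow T A p0 pt x t = x t"
  unfolding pad_flow_def by (rule if_P)

lemma pad_flow_outflow_outside_horizon:
  assumes "finite A" "A \<noteq> {}" "s \<in> S" "t \<notin> {1..T}"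
    and pt_sum: "\<And>s a. s \<in> S \<Longrightarrow> a \<in> A \<Longrightarrow> (\<Sum>s'\<in>S. pt s a s') = 1"
  shows "(\<Sum>a\<in>A. \<Sum>s'\<in>S. pad_flow T A p0 pt x t s a s') = p0 s"
proof -
  have "(\<Sum>a\<in>A. \<Sum>s'\<in>S. pad_flow T A p0 pt x t s a s')
      = (\<Sum>a\<in>A. p0 s / real (card A) * (\<Sum>s'\<in>S. pt s a s'))"
    unfolding pad_flow_def if_not_P[OF assms(4)] by (simp add: sum_distrib_left)
  also have "\<dots> = p0 s"
    using pt_sum assms(1-3) by simp
  finally show ?thesis .
qed

lemma fluid_component_of_Qd_relax:
  assumes Q: "Qd_relax T S Ob A p0 pe pt tau1 tauO tauT delta"
    and "finite A" "A \<noteq> {}"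
    and pt_sum: "\<And>s a. s \<in> S \<Longrightarrow> a \<in> A \<Longrightarrow> (\<Sum>s'\<in>S. pt s a s') = 1"
  shows "fluid_component T S A p0 pt tau1 (pad_flow T A p0 pt tauT)"
proof -
  let ?x = "pad_flow T A p0 pt tauT"
  have tau1_nn: "\<forall>s\<in>S. 0 \<le> tau1 s"
    and tau1_p0: "\<forall>s\<in>S. tau1 s = p0 s"
    and tauT_nn: "\<forall>t\<in>{1..T}. \<forall>s\<in>S. \<forall>a\<in>A. \<forall>s'\<in>S. 0 \<le> tauT t s a s'"
    and transition: "\<forall>t\<in>{1..T}. \<forall>s\<in>S. \<forall>a\<in>A. \<forall>s'\<in>S.
                       tauT t s a s' = pt s a s' * (\<Sum>s''\<in>S. tauT t s a s'')"
    using Q[unfolded Qd_relax_def] by meson+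
  have initial: "tau1 s = (\<Sum>a\<in>A. \<Sum>s'\<in>S. ?x 1 s a s')" if "s \<in> S" for s
  proof (cases "1 \<in> {1..T}")
    case True
    then show ?thesis
      using Qd_relax_outflow_eq_nu[OF Q True that]
      by (simp add: pad_flow_in_horizon nu_of_def)
  next
    case False
    then show ?thesis
      using pad_flow_outflow_outside_horizon[OF assms(2,3) that False pt_sum] tau1_p0 that
      by simp
  qed
  have flow: "(\<Sum>s'\<in>S. \<Sum>a'\<in>A. ?x t s' a' s) = (\<Sum>a'\<in>A. \<Sum>s'\<in>S. ?x (t+1) s a' s')"
    if "t \<in> {1..<T}" "s \<in> S" for t s
  proof -
    have "t \<in> {1..T}" "t + 1 \<in> {1..T}" using that(1) by auto
    then show ?thesis
      using Qd_relax_outflow_eq_nu[OF Q \<open>t + 1 \<in> {1..T}\<close> that(2)]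
      by (simp add: pad_flow_in_horizon nu_of_def)
  qed
  show ?thesis
    unfolding fluid_component_def
  proof (intro conjI ballI)
    fix t s a s' assume "t \<in> {1..T}" "s \<in> S" "a \<in> A" "s' \<in> S"
    then show "0 \<le> ?x t s a s'" "?x t s a s' = pt s a s' * (\<Sum>s''\<in>S. ?x t s a s'')"
      unfolding pad_flow_in_horizon[OF \<open>t \<in> {1..T}\<close>] using tauT_nn transition by blast+
  qed (use tau1_nn tau1_p0 initial flow in auto)
qed

lemma fluid_component_nu_eq_outflow:
  assumes X: "fluid_component T S A p0 pt x1 x" and "t \<in> {1..T}" "s \<in> S"
  shows "nu_of S A x1 x t s = (\<Sum>a\<in>A. \<Sum>s'\<in>S. x t s a s')"
proof (cases "t = 1")
  case True
  then show ?thesis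
    using X[unfolded fluid_component_def] assms(3) by (simp add: nu_of_def)
next
  case False
  then have "t - 1 \<in> {1..<T}" "t - 1 + 1 = t" using assms(2) by auto
  then show ?thesis
    using X[unfolded fluid_component_def] assms(3) False by (metis nu_of_def)
qed

lemma fluid_component_total_mass:
  assumes X: "fluid_component T S A p0 pt x1 x" and p0_sum: "(\<Sum>s\<in>S. p0 s) = 1"
    and "t \<in> {1..T}"
  shows "(\<Sum>s\<in>S. \<Sum>a\<in>A. \<Sum>s'\<in>S. x t s a s') = 1"
proof -
  have "1 \<le> t" "t \<le> T" using assms(3) by auto
  then show ?thesis
  proof (induction t rule: nat_induct_at_least)
    case base
    have "\<forall>s\<in>S. x1 s = (\<Sum>a\<in>A. \<Sum>s'\<in>S. x 1 s a s')" "\<forall>s\<in>S. x1 s = p0 s"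
      using X[unfolded fluid_component_def] by meson+
    then have "(\<Sum>s\<in>S. \<Sum>a\<in>A. \<Sum>s'\<in>S. x 1 s a s') = (\<Sum>s\<in>S. p0 s)"
      by (intro sum.cong) auto
    then show ?case using p0_sum by simp
  next
    case (Suc n)
    have inflow: "(\<Sum>a\<in>A. \<Sum>s'\<in>S. x (Suc n) s a s') = (\<Sum>s''\<in>S. \<Sum>a\<in>A. x n s'' a s)"
      if "s \<in> S" for s
      using fluid_component_nu_eq_outflow[OF X _ that, of "Suc n"] Suc.hyps Suc.prems
      by (simp add: nu_of_def)
    have "(\<Sum>s\<in>S. \<Sum>a\<in>A. \<Sum>s'\<in>S. x (Suc n) s a s') = (\<Sum>s\<in>S. \<Sum>s''\<in>S. \<Sum>a\<in>A. x n s'' a s)"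
      using inflow by (rule sum.cong[OF refl])
    also have "\<dots> = (\<Sum>s''\<in>S. \<Sum>s\<in>S. \<Sum>a\<in>A. x n s'' a s)"
      by (rule sum.swap)
    also have "\<dots> = (\<Sum>s''\<in>S. \<Sum>a\<in>A. \<Sum>s\<in>S. x n s'' a s)"
      by (intro sum.cong refl sum.swap)
    also have "\<dots> = 1"
      using Suc by simp
    finally show ?case .
  qed
qed

lemma Qd_relax_of_fluid_component:
  assumes X: "fluid_component T S A p0 pt x1 x"
    and "finite S" "finite Ob" "finite A"
    and p0_sum: "(\<Sum>s\<in>S. p0 s) = 1"
    and pe_nn: "\<And>s ob. s \<in> S \<Longrightarrow> ob \<in> Ob \<Longrightarrow> 0 \<le> pe s ob"
    and pe_sum: "\<And>s. s \<in> S \<Longrightarrow> (\<Sum>ob\<in>Ob. pe s ob) = 1"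
  shows "Qd_relax T S Ob A p0 pe pt x1 (\<lambda>t s ob a. pe s ob * (\<Sum>s'\<in>S. x t s a s')) x
           (\<lambda>t a ob. \<Sum>s\<in>S. \<Sum>s'\<in>S. x t s a s')"
proof -
  define y where "y t s a = (\<Sum>s'\<in>S. x t s a s')" for t s a
  have x_nn: "\<forall>t\<in>{1..T}. \<forall>s\<in>S. \<forall>a\<in>A. \<forall>s'\<in>S. 0 \<le> x t s a s'"
    and transition: "\<forall>t\<in>{1..T}. \<forall>s\<in>S. \<forall>a\<in>A. \<forall>s'\<in>S. x t s a s' = pt s a s' * (\<Sum>s''\<in>S. x t s a s'')"
    and x1_nn: "\<forall>s\<in>S. 0 \<le> x1 s" and x1_p0: "\<forall>s\<in>S. x1 s = p0 s"
    using X[unfolded fluid_component_def] by meson+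
  have y_nn: "0 \<le> y t s a" if "t \<in> {1..T}" "s \<in> S" "a \<in> A" for t s a
    unfolding y_def using x_nn that by (intro sum_nonneg) auto
  have y_mass: "(\<Sum>s\<in>S. \<Sum>a\<in>A. y t s a) = 1" if "t \<in> {1..T}" for t
    unfolding y_def using fluid_component_total_mass[OF X p0_sum that] .
  have nu_y: "nu_of S A x1 x t s = (\<Sum>a\<in>A. y t s a)" if "t \<in> {1..T}" "s \<in> S" for t s
    unfolding y_def using fluid_component_nu_eq_outflow[OF X that] .
  have col_sum: "(\<Sum>a\<in>A. \<Sum>s\<in>S. y t s a) = 1" if "t \<in> {1..T}" for t
    using y_mass[OF that] by (simp add: sum.swap[of _ A])
  have col_le_1: "(\<Sum>s\<in>S. y t s a) \<le> 1" if "t \<in> {1..T}" "a \<in> A" for t a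
    using member_le_sum[of a A "\<lambda>a. \<Sum>s\<in>S. y t s a"] col_sum[OF that(1)] y_nn that assms(4)
    by (simp add: sum_nonneg)
  have pe_le_1: "pe s ob \<le> 1" if "s \<in> S" "ob \<in> Ob" for s ob
    using member_le_sum[of ob Ob "pe s"] pe_sum pe_nn that assms(3) by simp
  show ?thesis
    unfolding Qd_relax_def y_def[symmetric]
  proof (intro conjI ballI)
    fix t ob a assume "t \<in> {1..T}" "ob \<in> Ob" "a \<in> A"
    then show "0 \<le> (\<Sum>s\<in>S. y t s a)" "(\<Sum>s\<in>S. y t s a) \<le> 1"
      using y_nn col_le_1 by (auto intro: sum_nonneg)
  next
    fix t ob assume "t \<in> {1..T}"
    then show "(\<Sum>a\<in>A. \<Sum>s\<in>S. y t s a) = 1" by (rule col_sum)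
  next
    fix t s assume ts: "t \<in> {1..T}" "s \<in> S"
    have "(\<Sum>ob\<in>Ob. \<Sum>a\<in>A. pe s ob * y t s a) = (\<Sum>a\<in>A. (\<Sum>ob\<in>Ob. pe s ob) * y t s a)"
      by (subst sum.swap) (simp add: sum_distrib_right)
    then show "(\<Sum>ob\<in>Ob. \<Sum>a\<in>A. pe s ob * y t s a) = nu_of S A x1 x t s"
      using pe_sum nu_y ts by simp
  next
    fix t s a assume "s \<in> S"
    then show "y t s a = (\<Sum>ob\<in>Ob. pe s ob * y t s a)"
      using pe_sum by (simp add: sum_distrib_right[symmetric])
  next
    fix t s a s' assume "t \<in> {1..T}" "s \<in> S" "a \<in> A" "s' \<in> S"
    then show "0 \<le> x t s a s'" "x t s a s' = pt s a s' * y t s a"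
      unfolding y_def using x_nn transition by blast+
  next
    fix s assume "s \<in> S"
    then show "0 \<le> x1 s" "x1 s = p0 s" using x1_nn x1_p0 by blast+
  next
    fix t s ob a assume h: "t \<in> {1..T}" "s \<in> S" "ob \<in> Ob" "a \<in> A"
    show "0 \<le> pe s ob * y t s a"
      using pe_nn y_nn h by simp
    show "pe s ob * y t s a \<le> pe s ob * nu_of S A x1 x t s"
      and "pe s ob * y t s a \<le> (\<Sum>s\<in>S. y t s a)"
      and "pe s ob * nu_of S A x1 x t s + (\<Sum>s\<in>S. y t s a) - 1 \<le> pe s ob * y t s a"
      using probability_matrix_mccormick[OF assms(2,4) y_nn[OF h(1)] y_mass[OF h(1)] h(2,4)
          pe_nn[OF h(2,3)] pe_le_1[OF h(2,3)]] nu_y[OF h(1,2)]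
      by simp_all
  qed
qed

lemma Qd_relax_action_marginal:
  assumes Q: "Qd_relax T S Ob A p0 pe pt tau1 tauO tauT delta" and "t \<in> {1..T}" "a \<in> A"
  shows "(\<Sum>s\<in>S. \<Sum>s'\<in>S. tauT t s a s') = (\<Sum>s\<in>S. \<Sum>ob\<in>Ob. tauO t s ob a)"
proof -
  have "\<forall>s\<in>S. (\<Sum>s'\<in>S. tauT t s a s') = (\<Sum>ob\<in>Ob. tauO t s ob a)"
    using Q[unfolded Qd_relax_def] assms(2,3) by meson
  then show ?thesis by (intro sum.cong) auto
qed

lemma F_feasible_of_IPd_relax_feasible:
  assumes "finite A" "A \<noteq> {}"
    and pt_sum: "\<And>m s a. m \<in> {1..M} \<Longrightarrow> s \<in> S m \<Longrightarrow> a \<in> A \<Longrightarrow> (\<Sum>s'\<in>S m. pt m s a s') = 1"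
    and feas: "IPd_relax_feasible M T S Ob A p0 pe pt tau1 tauO tauT delta"
  shows "\<exists>x Aa. F_feasible M T S A p0 pt tau1 x Aa \<and> IPd_obj M T S A r x = IPd_obj M T S A r tauT"
proof -
  define x where "x t m = pad_flow T A (p0 m) (pt m) (\<lambda>t. tauT t m) t" for t m
  define marginal where "marginal t m a = (\<Sum>s\<in>S m. \<Sum>s'\<in>S m. x t m s a s')" for t m a
  define Aa where "Aa t a = (if M = 0 then 0 else marginal t 1 a)" for t a
  have Q: "Qd_relax T (S m) (Ob m) A (p0 m) (pe m) (pt m)
             (tau1 m) (\<lambda>t. tauO t m) (\<lambda>t. tauT t m) (\<lambda>t. delta t m)" if "m \<in> {1..M}" for m
    using feas that unfolding IPd_relax_feasible_def by blast
  have fluid: "fluid_component T (S m) A (p0 m) (pt m) (tau1 m) (\<lambda>t. x t m)" if "m \<in> {1..M}" for m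
    unfolding x_def using fluid_component_of_Qd_relax[OF Q[OF that] assms(1,2) pt_sum[OF that]]
    by (simp add: fun_eq_iff)
  have marginal_obs: "marginal t m a = (\<Sum>s\<in>S m. \<Sum>ob\<in>Ob m. tauO t m s ob a)"
    if "t \<in> {1..T}" "m \<in> {1..M}" "a \<in> A" for t m a
    using Qd_relax_action_marginal[OF Q[OF that(2)] that(1,3)] that(1)
    by (simp add: marginal_def x_def pad_flow_in_horizon)
  have marginal_common: "marginal t m a = Aa t a"
    if "t \<in> {1..T}" "m \<in> {1..M}" "a \<in> A" for t m a
  proof -
    have "\<forall>m\<in>{1..<M}. marginal t m a = marginal t (m + 1) a"
      using feas marginal_obs that(1,3) unfolding IPd_relax_feasible_def by auto
    then have "marginal t m a = marginal t 1 a"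
      using that(2) by (rule eq_first_if_consecutive_eq)
    then show ?thesis
      using that(2) by (simp add: Aa_def)
  qed
  have Aa_nn: "0 \<le> Aa t a" if "t \<in> {1..T}" "a \<in> A" for t a
  proof (cases "M = 0")
    case False
    then have "1 \<in> {1..M}" by simp
    then have "\<forall>s\<in>S 1. \<forall>s'\<in>S 1. 0 \<le> x t 1 s a s'"
      using fluid[of 1, unfolded fluid_component_def] that by meson
    then show ?thesis
      using False by (simp add: Aa_def marginal_def sum_nonneg)
  qed (simp add: Aa_def)
  have "F_feasible M T S A p0 pt tau1 x Aa"
    unfolding F_feasible_iff_fluid_components
    using fluid Aa_nn marginal_common by (simp add: marginal_def)
  moreover have "IPd_obj M T S A r x = IPd_obj M T S A r tauT"
    unfolding IPd_obj_def x_def by (intro sum.cong refl) (simp add: pad_flow_in_horizon)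
  ultimately show ?thesis by blast
qed

lemma IPd_relax_feasible_of_F_feasible:
  fixes Ob :: "nat \<Rightarrow> 'ob set"
  assumes finS: "\<And>m. m \<in> {1..M} \<Longrightarrow> finite (S m)"
    and finO: "\<And>m. m \<in> {1..M} \<Longrightarrow> finite (Ob m)"
    and finA: "finite A"
    and p0_sum: "\<And>m. m \<in> {1..M} \<Longrightarrow> (\<Sum>s\<in>S m. p0 m s) = 1"
    and pe_nn: "\<And>m s ob. m \<in> {1..M} \<Longrightarrow> s \<in> S m \<Longrightarrow> ob \<in> Ob m \<Longrightarrow> 0 \<le> pe m s ob"
    and pe_sum: "\<And>m s. m \<in> {1..M} \<Longrightarrow> s \<in> S m \<Longrightarrow> (\<Sum>ob\<in>Ob m. pe m s ob) = 1"
    and F: "F_feasible M T S A p0 pt x1 x Aa"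
  shows "\<exists>tauO delta. IPd_relax_feasible M T S Ob A p0 pe pt x1 tauO x delta"
proof -
  define tauO where "tauO t m s ob a = pe m s ob * (\<Sum>s'\<in>S m. x t m s a s')" for t m s ob a
  define delta where "delta t m a (ob::'ob) = (\<Sum>s\<in>S m. \<Sum>s'\<in>S m. x t m s a s')" for t m a ob
  have fluid: "fluid_component T (S m) A (p0 m) (pt m) (x1 m) (\<lambda>t. x t m)"
    and marginal: "\<forall>t\<in>{1..T}. \<forall>a\<in>A. (\<Sum>s\<in>S m. \<Sum>s'\<in>S m. x t m s a s') = Aa t a"
    if "m \<in> {1..M}" for m
    using F that unfolding F_feasible_iff_fluid_components by blast+
  have obs_marginal: "(\<Sum>s\<in>S m. \<Sum>ob\<in>Ob m. tauO t m s ob a) = Aa t a"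
    if "t \<in> {1..T}" "m \<in> {1..M}" "a \<in> A" for t m a
  proof -
    have "(\<Sum>s\<in>S m. \<Sum>ob\<in>Ob m. tauO t m s ob a) = (\<Sum>s\<in>S m. \<Sum>s'\<in>S m. x t m s a s')"
      using pe_sum[OF that(2)] by (simp add: tauO_def sum_distrib_right[symmetric])
    then show ?thesis using marginal that by simp
  qed
  have "IPd_relax_feasible M T S Ob A p0 pe pt x1 tauO x delta"
    unfolding IPd_relax_feasible_def
  proof (intro conjI ballI)
    fix m assume m: "m \<in> {1..M}"
    show "Qd_relax T (S m) (Ob m) A (p0 m) (pe m) (pt m)
            (x1 m) (\<lambda>t. tauO t m) (\<lambda>t. x t m) (\<lambda>t. delta t m)"
      unfolding tauO_def delta_def
      using Qd_relax_of_fluid_component[OF fluid[OF m] finS[OF m] finO[OF m] finA p0_sum[OF m]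
          pe_nn[OF m] pe_sum[OF m]] .
  next
    fix t m a assume "t \<in> {1..T}" "m \<in> {1..<M}" "a \<in> A"
    then show "(\<Sum>s\<in>S m. \<Sum>ob\<in>Ob m. tauO t m s ob a)
             = (\<Sum>s\<in>S (m+1). \<Sum>ob\<in>Ob (m+1). tauO t (m+1) s ob a)"
      using obs_marginal[of t m a] obs_marginal[of t "m+1" a] by simp
  qed
  then show ?thesis by blast
qed

theorem mainTheorem10:
  fixes M T :: nat
    and S :: "nat \<Rightarrow> 's set" and Ob :: "nat \<Rightarrow> 'ob set" and A :: "'a set"
    and p0 :: "nat \<Rightarrow> 's \<Rightarrow> real" and pe :: "nat \<Rightarrow> 's \<Rightarrow> 'ob \<Rightarrow> real"
    and pt :: "nat \<Rightarrow> 's \<Rightarrow> 'a \<Rightarrow> 's \<Rightarrow> real" and r :: "nat \<Rightarrow> 's \<Rightarrow> 'a \<Rightarrow> 's \<Rightarrow> real"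
  assumes finS: "\<And>m. m \<in> {1..M} \<Longrightarrow> finite (S m)"
    and finO: "\<And>m. m \<in> {1..M} \<Longrightarrow> finite (Ob m)"
    and finA: "finite A" and neA: "A \<noteq> {}"
    and p0_nn: "\<And>m s. m \<in> {1..M} \<Longrightarrow> s \<in> S m \<Longrightarrow> 0 \<le> p0 m s"
    and p0_sum: "\<And>m. m \<in> {1..M} \<Longrightarrow> (\<Sum>s\<in>S m. p0 m s) = 1"
    and pe_nn: "\<And>m s ob. m \<in> {1..M} \<Longrightarrow> s \<in> S m \<Longrightarrow> ob \<in> Ob m \<Longrightarrow> 0 \<le> pe m s ob"
    and pe_sum: "\<And>m s. m \<in> {1..M} \<Longrightarrow> s \<in> S m \<Longrightarrow> (\<Sum>ob\<in>Ob m. pe m s ob) = 1"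
    and pt_nn: "\<And>m s a s'. m \<in> {1..M} \<Longrightarrow> s \<in> S m \<Longrightarrow> a \<in> A \<Longrightarrow> s' \<in> S m \<Longrightarrow> 0 \<le> pt m s a s'"
    and pt_sum: "\<And>m s a. m \<in> {1..M} \<Longrightarrow> s \<in> S m \<Longrightarrow> a \<in> A \<Longrightarrow> (\<Sum>s'\<in>S m. pt m s a s') = 1"
  shows "(\<forall>v::real.
            (\<exists>tau1 tauO tauT delta. IPd_relax_feasible M T S Ob A p0 pe pt tau1 tauO tauT delta
                 \<and> IPd_obj M T S A r tauT = v)
          \<longleftrightarrow> (\<exists>x1 x Aa. F_feasible M T S A p0 pt x1 x Aa \<and> IPd_obj M T S A r x = v))
       \<and> z_F M T S A p0 pt r = z_R M T S Ob A p0 pe pt r"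
proof -
  have values_agree: "(\<exists>tau1 tauO tauT delta.
             IPd_relax_feasible M T S Ob A p0 pe pt tau1 tauO tauT delta \<and> IPd_obj M T S A r tauT = v)
          \<longleftrightarrow> (\<exists>x1 x Aa. F_feasible M T S A p0 pt x1 x Aa \<and> IPd_obj M T S A r x = v)" for v
  proof
    assume "\<exists>tau1 tauO tauT delta.
              IPd_relax_feasible M T S Ob A p0 pe pt tau1 tauO tauT delta \<and> IPd_obj M T S A r tauT = v"
    then obtain tau1 tauO tauT delta where feas: "IPd_relax_feasible M T S Ob A p0 pe pt tau1 tauO tauT delta"
      and "IPd_obj M T S A r tauT = v" by blast
    with F_feasible_of_IPd_relax_feasible[OF finA neA pt_sum feas]
    show "\<exists>x1 x Aa. F_feasible M T S A p0 pt x1 x Aa \<and> IPd_obj M T S A r x = v" by metis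
  next
    assume "\<exists>x1 x Aa. F_feasible M T S A p0 pt x1 x Aa \<and> IPd_obj M T S A r x = v"
    then obtain x1 x Aa where feas: "F_feasible M T S A p0 pt x1 x Aa"
      and "IPd_obj M T S A r x = v" by blast
    with IPd_relax_feasible_of_F_feasible[where Ob = Ob and pe = pe,
        OF finS finO finA p0_sum pe_nn pe_sum feas]
    show "\<exists>tau1 tauO tauT delta.
            IPd_relax_feasible M T S Ob A p0 pe pt tau1 tauO tauT delta \<and> IPd_obj M T S A r tauT = v"
      by metis
  qed
  then have "{IPd_obj M T S A r x | x1 x Aa. F_feasible M T S A p0 pt x1 x Aa}
      = {IPd_obj M T S A r tauT | tau1 tauO tauT delta.
           IPd_relax_feasible M T S Ob A p0 pe pt tau1 tauO tauT delta}"
    by (intro Collect_cong) metis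
  with values_agree show ?thesis
    unfolding z_F_def z_R_def by simp
qed

end
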